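(* For $r\ge2$ and $n\ge1$, the base-$r$ $n$-simplex has local $h^\ast$-polynomial \[ \ell^\ast(\mathcal{B}_{(r,n)};z)=z\sum_{i=0}^{r-2}f^{\langle r-1,i\rangle}_{(r,n-1)}+z\sum_{\ell=1}^{r-2}\left(\sum_{i=0}^{\ell-1}f^{\langle r-1,i\rangle}_{(r,n-1)}+z\sum_{i=\ell}^{r-2}f^{\langle r-1,i\rangle}_{(r,n-1)}\right). \]
   Context: For $r\ge2$, $n\ge1$, $\mathcal{B}_{(r,n)}:=\operatorname{conv}\bigl(e^{(1)},\ldots,e^{(n)},-\sum_{i=1}^n(r-1)r^{i-1}e^{(i)}\bigr)\subset\mathbb{R}^n$. For $m\ge0$ let $f_{(r,m)}(z):=(1+z+\cdots+z^{r-1})^m$ (so $f_{(r,0)}=1$). Every polynomial $f(z)\in\mathbb{R}[z]$ can be written uniquely as $f(z)=\sum_{\ell=0}^{r-2}z^\ell f^{(\ell)}(z^{r-1})$ with $f^{(\ell)}\in\mathbb{R}[z]$; set $f^{\langle r-1,\ell\rangle}:=f^{(\ell)}$ for $0\le\ell\le r-2$. For a lattice simplex $\Delta=\operatorname{conv}(v^{(0)},\ldots,v^{(d)})\subset\mathbb{R}^n$, $\ell^\ast(\Delta;z):=\sum_{x\in\Pi^\circ_\Delta\cap\mathbb{Z}^{n+1}}z^{x_{n+1}}$, where $\Pi^\circ_\Delta:=\{\sum_{i=0}^d\lambda_i(v^{(i)},1):0<\lambda_i<1\}$. *)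

theory Defs
  imports "HOL-Computational_Algebra.Polynomial"
begin

text \<open>Points of \<open>\<real>^N\<close> / \<open>\<int>^N\<close> are functions \<open>nat \<Rightarrow> _\<close> on the coordinates \<open>0..<N\<close>.
  A lattice simplex in \<open>\<real>^n\<close> with vertices \<open>v 0, \<dots>, v d\<close> (each \<open>v i :: nat \<Rightarrow> int\<close>,
  coordinates \<open>0..<n\<close>).  The lifted point \<open>(v i, 1)\<close> lives in \<open>\<real>^(n+1)\<close>, its extra
  (last) coordinate being coordinate \<open>n\<close>.\<close>

definition open_pp_lattice_points :: "nat \<Rightarrow> nat \<Rightarrow> (nat \<Rightarrow> nat \<Rightarrow> int) \<Rightarrow> (nat \<Rightarrow> int) set" where
  "open_pp_lattice_points n d v =
     {x. (\<forall>j>n. x j = 0) \<and>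
         (\<exists>c::nat \<Rightarrow> real. (\<forall>i\<le>d. 0 < c i \<and> c i < 1) \<and>
            (\<forall>j<n. real_of_int (x j) = (\<Sum>i\<le>d. c i * real_of_int (v i j))) \<and>
            real_of_int (x n) = (\<Sum>i\<le>d. c i))}"

definition local_hstar :: "nat \<Rightarrow> nat \<Rightarrow> (nat \<Rightarrow> nat \<Rightarrow> int) \<Rightarrow> real poly" where
  "local_hstar n d v = (\<Sum>x\<in>open_pp_lattice_points n d v. monom 1 (nat (x n)))"

text \<open>Vertices of the base-r n-simplex: \<open>e^(i+1)\<close> for \<open>i<n\<close> and the last vertex
  \<open>-\<Sum>_(i=1..n) (r-1) r^(i-1) e^(i)\<close> (0-indexed coordinates).\<close>
definition base_vertices :: "nat \<Rightarrow> nat \<Rightarrow> nat \<Rightarrow> nat \<Rightarrow> int" where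
  "base_vertices r n i j =
     (if i < n then (if j = i then 1 else 0)
      else (if j < n then - ((int r - 1) * int r ^ j) else 0))"

definition f_r :: "nat \<Rightarrow> nat \<Rightarrow> real poly" where
  "f_r r m = (\<Sum>i<r. monom 1 i) ^ m"

text \<open>\<open>f^<q,l>\<close>: the unique \<open>f^(l)\<close> with \<open>f(z) = \<Sum>_(l<q) z^l f^(l)(z^q)\<close>;
  coefficientwise, \<open>coeff f^(l) k = coeff f (l + q k)\<close>.\<close>
definition section_poly :: "nat \<Rightarrow> nat \<Rightarrow> real poly \<Rightarrow> real poly" where
  "section_poly q l f = (\<Sum>k\<le>degree f. monom (coeff f (l + q * k)) k)"

end

theory Submission
  imports Defs "HOL-Number_Theory.Cong"
begin

text \<open>
  A lattice point of the open fundamental parallelepiped of B(r,n) is determined by the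
  coefficient k / r^n of the last vertex, where 0 < k < r^n and r does not divide k; the
  other coefficients are the fractional parts of (r - 1) k r^j / r^n. By Legendre's formula
  its height is \<lceil>s((r - 1) k mod r^n) / (r - 1)\<rceil>, where s is the base-r digit sum, and
  multiplication by r - 1 permutes these residues. Splitting off the last digit a \<noteq> 0 turns
  the local h*-polynomial into the sum of z^\<lceil>(a + s(b)) / (r - 1)\<rceil> over the remaining
  digits b. Since f(r,n-1) is the generating function of s(b), sorting these exponents by
  s(b) mod (r - 1) produces the sections of f(r,n-1).
\<close>

section \<open>Base-r digit sums\<close>

definition digit_sum :: "nat \<Rightarrow> nat \<Rightarrow> nat \<Rightarrow> nat" where
  "digit_sum r m K = (\<Sum>s<m. K div r ^ s mod r)"

lemma digit_sum_Suc: "digit_sum r (Suc m) K = K mod r + digit_sum r m (K div r)"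
  unfolding digit_sum_def sum.lessThan_Suc_shift by (simp add: div_mult2_eq)

lemma digit_sum_Suc_add_mult:
  "a < r \<Longrightarrow> digit_sum r (Suc m) (a + r * b) = a + digit_sum r m b"
  by (simp add: digit_sum_Suc)

lemma digit_sum_mod_power: "digit_sum r m (K mod r ^ m) = digit_sum r m K"
proof (induction m arbitrary: K)
  case (Suc m)
  have "K mod r ^ Suc m div r = K div r mod r ^ m"
    by (cases "r = 0") (auto simp: mod_mult2_eq)
  then show ?case by (simp add: digit_sum_Suc mod_mod_cancel Suc.IH)
qed (simp add: digit_sum_def)

lemma digit_sum_legendre:
  assumes "r > 0"
  shows "(r - 1) * (\<Sum>s<m. K div r ^ Suc s) + digit_sum r m K + K div r ^ m = K"
proof (induction m arbitrary: K)
  case (Suc m)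
  define Q where "Q = K div r"
  have "(\<Sum>s<Suc m. K div r ^ Suc s) = (\<Sum>s<Suc m. Q div r ^ s)"
    by (simp add: Q_def div_mult2_eq)
  also have "\<dots> = Q + (\<Sum>s<m. Q div r ^ Suc s)"
    by (simp only: sum.lessThan_Suc_shift power_0 div_by_1)
  finally have "(r - 1) * (\<Sum>s<Suc m. K div r ^ Suc s) + digit_sum r (Suc m) K + K div r ^ Suc m
      = ((r - 1) * Q + K mod r) + ((r - 1) * (\<Sum>s<m. Q div r ^ Suc s) + digit_sum r m Q + Q div r ^ m)"
    by (simp add: Q_def digit_sum_Suc div_mult2_eq add_mult_distrib2)
  also have "\<dots> = (r - 1) * Q + K mod r + Q"
    by (simp only: Suc.IH)
  also have "\<dots> = K"
    using assms mult_div_mod_eq[of r K] by (cases r) (simp_all add: Q_def)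
  finally show ?case .
qed (simp add: digit_sum_def)

lemma sum_lessThan_mult_split:
  fixes g :: "nat \<Rightarrow> 'a::comm_monoid_add"
  shows "(\<Sum>x<r * N. g x) = (\<Sum>a<r. \<Sum>b<N. g (a + r * b))"
proof -
  have "(\<Sum>x<r * N. g x) = (\<Sum>b<N. \<Sum>x\<in>{0 + b * r..<r + b * r}. g x)"
    using sum.nat_group[of g r N] by (simp add: mult.commute add.commute)
  also have "\<dots> = (\<Sum>b<N. \<Sum>a<r. g (a + r * b))"
    by (simp only: sum.shift_bounds_nat_ivl atLeast0LessThan mult.commute)
  also have "\<dots> = (\<Sum>a<r. \<Sum>b<N. g (a + r * b))"
    by (rule sum.swap)
  finally show ?thesis .
qed

lemma f_r_eq_sum_digit_sum: "f_r r m = (\<Sum>b<r ^ m. monom 1 (digit_sum r m b))"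
proof (induction m)
  case (Suc m)
  have "f_r r (Suc m) = (\<Sum>a<r. monom 1 a) * (\<Sum>b<r ^ m. monom 1 (digit_sum r m b))"
    by (simp add: f_r_def Suc[unfolded f_r_def])
  also have "\<dots> = (\<Sum>a<r. \<Sum>b<r ^ m. monom 1 (digit_sum r (Suc m) (a + r * b)))"
    by (simp add: sum_distrib_left sum_distrib_right mult_monom digit_sum_Suc_add_mult)
      (rule sum.swap)
  also have "\<dots> = (\<Sum>b<r ^ Suc m. monom 1 (digit_sum r (Suc m) b))"
    by (simp only: sum_lessThan_mult_split power_Suc)
  finally show ?case .
qed (simp add: f_r_def digit_sum_def)

section \<open>Sections of polynomials\<close>

lemma coeff_section_poly:
  assumes "q > 0"
  shows "coeff (section_poly q i f) k = coeff f (i + q * k)"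
proof (cases "k \<le> degree f")
  case False
  moreover have "k \<le> i + q * k"
    using assms by (simp add: trans_le_add2)
  ultimately have "degree f < i + q * k"
    by linarith
  with False show ?thesis
    by (simp add: section_poly_def coeff_sum coeff_monom coeff_eq_0)
qed (simp add: section_poly_def coeff_sum coeff_monom)

lemma sum_section_poly_sum_monom:
  fixes E :: "'b \<Rightarrow> nat"
  assumes "q > 0" and "I \<subseteq> {..<q}"
  shows "(\<Sum>i\<in>I. section_poly q i (\<Sum>b\<in>B. monom (1::real) (E b)))
    = (\<Sum>b\<in>B. if E b mod q \<in> I then monom 1 (E b div q) else 0)"
proof (rule poly_eqI)
  fix k
  have "finite I"
    using assms(2) finite_subset by blast
  have digits: "E b = i + q * k \<longleftrightarrow> i = E b mod q \<and> E b div q = k" if "i \<in> I" for b i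
  proof
    assume "E b = i + q * k"
    then show "i = E b mod q \<and> E b div q = k"
      using that assms by auto
  qed (metis add.commute div_mult_mod_eq mult.commute)
  have "(\<Sum>i\<in>I. if E b = i + q * k then 1 else 0)
      = (if E b mod q \<in> I \<and> E b div q = k then 1 else (0::real))" for b
    using \<open>finite I\<close> by (cases "E b div q = k") (simp_all add: digits sum.delta cong: sum.cong)
  then show "coeff (\<Sum>i\<in>I. section_poly q i (\<Sum>b\<in>B. monom 1 (E b))) k
      = coeff (\<Sum>b\<in>B. if E b mod q \<in> I then monom 1 (E b div q) else 0) k"
    unfolding coeff_sum coeff_section_poly[OF assms(1)] coeff_monom
    by (subst sum.swap) (auto intro!: sum.cong)
qed

lemma add_double_diff_div:
  fixes E q l :: nat
  assumes "0 < l" and "l \<le> q"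
  shows "(E + 2 * q - l) div q = E div q + 1 + (if l \<le> E mod q then 1 else 0)"
proof -
  have "q \<noteq> 0"
    using assms by simp
  have "E + 2 * q - l = (E mod q + q - l) + q * (E div q + 1)"
    using assms by (simp add: algebra_simps)
  then have "(E + 2 * q - l) div q = (E mod q + q - l) div q + (E div q + 1)"
    by (simp only: div_mult_self2[OF \<open>q \<noteq> 0\<close>] add.commute)
  moreover have "(m + q - l) div q = (if l \<le> m then 1 else 0)" if "m < q" for m
    using assms that by (auto simp: div_eq_0_iff le_div_geq)
  ultimately show ?thesis
    using assms by simp
qed

lemma section_poly_partial_sums:
  fixes E :: "'b \<Rightarrow> nat" and B :: "'b set"
  assumes "0 < l" and "l \<le> q"
  defines "F \<equiv> \<lambda>i. section_poly q i (\<Sum>b\<in>B. monom (1::real) (E b))"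
  shows "(\<Sum>i = 0..l - 1. F i) + [:0, 1:] * (\<Sum>i = l..q - 1. F i)
    = (\<Sum>b\<in>B. monom 1 (E b div q + (if l \<le> E b mod q then 1 else 0)))"
proof -
  have "q > 0" using assms by simp
  have "(\<Sum>i = 0..l - 1. F i) = (\<Sum>b\<in>B. if E b mod q < l then monom 1 (E b div q) else 0)"
    unfolding F_def using assms
    by (subst sum_section_poly_sum_monom) (auto intro!: sum.cong)
  moreover have "(\<Sum>i = l..q - 1. F i) = (\<Sum>b\<in>B. if l \<le> E b mod q then monom 1 (E b div q) else 0)"
    unfolding F_def using assms \<open>q > 0\<close>
    by (subst sum_section_poly_sum_monom) (auto intro!: sum.cong simp: less_Suc_eq_le[symmetric])
  ultimately show ?thesis
    by (auto simp: sum_distrib_left sum.distrib[symmetric] monom_Suc intro!: sum.cong)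
qed

text \<open>(a + E + q - 1) div q is \<lceil>(a + E) / q\<rceil>. The summand for l produces a = q + 1 - l,
  and the first term is the missing summand for l = q.\<close>

lemma section_poly_staircase_sum:
  fixes E :: "'b \<Rightarrow> nat" and B :: "'b set"
  assumes "q > 0"
  defines "F \<equiv> \<lambda>i. section_poly q i (\<Sum>b\<in>B. monom (1::real) (E b))"
  shows "[:0, 1:] * (\<Sum>i = 0..q - 1. F i)
      + [:0, 1:] * (\<Sum>l = 1..q - 1. (\<Sum>i = 0..l - 1. F i) + [:0, 1:] * (\<Sum>i = l..q - 1. F i))
    = (\<Sum>a = 1..q. \<Sum>b\<in>B. monom 1 ((a + E b + q - 1) div q))"
proof -
  define X where "X l = (\<Sum>i = 0..l - 1. F i) + [:0, 1:] * (\<Sum>i = l..q - 1. F i)" for l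
  have "(\<Sum>i = 0..q - 1. F i) = X q"
    using assms by (simp add: X_def)
  moreover have "{1..q} = insert q {1..q - 1}"
    using assms by auto
  ultimately have "[:0, 1:] * (\<Sum>i = 0..q - 1. F i) + [:0, 1:] * (\<Sum>l = 1..q - 1. X l)
      = [:0, 1:] * (\<Sum>l = 1..q. X l)"
    using assms by (simp add: algebra_simps)
  also have "\<dots> = (\<Sum>l = 1..q. \<Sum>b\<in>B. monom 1 ((q + 1 - l + E b + q - 1) div q))"
  proof (unfold sum_distrib_left, intro sum.cong refl)
    fix l assume "l \<in> {1..q}"
    then have "X l = (\<Sum>b\<in>B. monom 1 (E b div q + (if l \<le> E b mod q then 1 else 0)))"
      unfolding X_def F_def by (intro section_poly_partial_sums) auto
    moreover have "q + 1 - l + E b + q - 1 = E b + 2 * q - l" for b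
      using \<open>l \<in> {1..q}\<close> by simp
    ultimately show "[:0, 1:] * X l = (\<Sum>b\<in>B. monom 1 ((q + 1 - l + E b + q - 1) div q))"
      using \<open>l \<in> {1..q}\<close> by (simp add: sum_distrib_left add_double_diff_div monom_Suc)
  qed
  also have "\<dots> = (\<Sum>a = 1..q. \<Sum>b\<in>B. monom 1 ((a + E b + q - 1) div q))"
    by (rule sum.reindex_bij_witness[of _ "\<lambda>a. q + 1 - a" "\<lambda>l. q + 1 - l"]) auto
  finally show ?thesis
    by (simp only: X_def)
qed

section \<open>Lattice points of the open parallelepiped\<close>

definition nonmultiples_below :: "nat \<Rightarrow> nat \<Rightarrow> nat set" where
  "nonmultiples_below d N = {k. k < N \<and> \<not> d dvd k}"

lemma bij_betw_mult_mod_nonmultiples_below: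
  assumes "coprime u N" and "d dvd N"
  shows "bij_betw (\<lambda>k. u * k mod N) (nonmultiples_below d N) (nonmultiples_below d N)"
proof -
  have inj: "inj_on (\<lambda>k. u * k mod N) (nonmultiples_below d N)"
  proof (rule inj_onI)
    fix k k' assume "k \<in> nonmultiples_below d N" "k' \<in> nonmultiples_below d N"
      and "u * k mod N = u * k' mod N"
    then have "[k = k'] (mod N)"
      using assms(1) cong_mult_lcancel_nat by (simp add: cong_def)
    then show "k = k'"
      using \<open>k \<in> _\<close> \<open>k' \<in> _\<close> by (simp add: cong_def nonmultiples_below_def)
  qed
  have "coprime d u"
    using assms by (metis coprime_divisors coprime_commute dvd_refl)
  then have "(\<lambda>k. u * k mod N) ` nonmultiples_below d N \<subseteq> nonmultiples_below d N"
    using assms(2) by (auto simp: nonmultiples_below_def dvd_mod_iff coprime_dvd_mult_right_iff)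
  moreover have "finite (nonmultiples_below d N)"
    by (simp add: nonmultiples_below_def)
  ultimately show ?thesis
    using inj by (simp add: bij_betw_def endo_inj_surj)
qed

lemma sum_nonmultiples_below_mult:
  fixes h :: "nat \<Rightarrow> 'a::comm_monoid_add"
  shows "(\<Sum>k\<in>nonmultiples_below r (r * M). h k) = (\<Sum>a = 1..r - 1. \<Sum>b<M. h (a + r * b))"
proof -
  have "nonmultiples_below r (r * M) = {..<r * M} \<inter> {k. \<not> r dvd k}"
    by (auto simp: nonmultiples_below_def)
  then have "(\<Sum>k\<in>nonmultiples_below r (r * M). h k) = (\<Sum>k<r * M. if \<not> r dvd k then h k else 0)"
    by (simp add: sum.inter_restrict)
  also have "\<dots> = (\<Sum>a<r. \<Sum>b<M. if \<not> r dvd (a + r * b) then h (a + r * b) else 0)"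
    by (rule sum_lessThan_mult_split)
  also have "\<dots> = (\<Sum>a = 1..r - 1. \<Sum>b<M. h (a + r * b))"
  proof (rule sum.mono_neutral_cong_right)
    have "\<not> r dvd a + r * b" if "a \<in> {1..r - 1}" for a b
    proof -
      have "0 < a" "a < r"
        using that by auto
      then show ?thesis
        using nat_dvd_not_less[of a r] by (simp add: dvd_add_left_iff)
    qed
    then show "(\<Sum>b<M. if \<not> r dvd a + r * b then h (a + r * b) else 0) = (\<Sum>b<M. h (a + r * b))"
      if "a \<in> {1..r - 1}" for a
      using that by simp
  qed (auto simp: Suc_le_eq)
  finally show ?thesis .
qed

lemma int_add_frac_in_unit_interval_iff:
  fixes x :: int and Y N :: nat
  assumes "N > 0"
  shows "(0 < x + Y / N \<and> x + Y / N < 1) \<longleftrightarrow> x = - int (Y div N) \<and> \<not> N dvd Y"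
proof -
  define m where "m = x + int (Y div N)"
  define f where "f = real (Y mod N) / N"
  have split: "x + Y / N = m + f"
    unfolding m_def f_def by (subst of_nat_of_nat_div_aux) simp
  have f: "0 \<le> f" "f < 1"
    using assms by (simp_all add: f_def)
  have f_pos: "0 < f \<longleftrightarrow> \<not> N dvd Y"
    using assms by (auto simp: f_def dvd_eq_mod_eq_0 zero_less_divide_iff)
  have "0 < m + f \<and> m + f < 1 \<longleftrightarrow> m = 0 \<and> 0 < f"
  proof (cases "m = 0")
    case False
    then have "m \<le> -1 \<or> 1 \<le> m"
      by linarith
    then have "real_of_int m \<le> -1 \<or> 1 \<le> real_of_int m"
      by linarith
    then show ?thesis
      using f False by linarith
  qed (use f in simp)
  moreover have "m = 0 \<longleftrightarrow> x = - int (Y div N)"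
    unfolding m_def by linarith
  ultimately show ?thesis
    using split f_pos by presburger
qed

lemma sum_base_vertices:
  fixes c :: "nat \<Rightarrow> real"
  assumes "r \<ge> 1" and "j < n"
  shows "(\<Sum>i\<le>n. c i * base_vertices r n i j) = c j - c n * real ((r - 1) * r ^ j)"
proof -
  have "(\<Sum>i<n. c i * base_vertices r n i j) = (\<Sum>i<n. if i = j then c i else 0)"
    by (intro sum.cong refl) (simp add: base_vertices_def)
  then show ?thesis
    using assms by (simp add: lessThan_Suc_atMost[symmetric] base_vertices_def of_nat_diff)
qed

lemma sum_pred_mult_power: "r \<ge> 1 \<Longrightarrow> (\<Sum>j<n. real ((r - 1) * r ^ j)) + 1 = real (r ^ n)"
  using power_diff_1_eq[of "real r" n] by (simp add: of_nat_diff sum_distrib_left)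

text \<open>Here t is the coefficient of the last vertex; the coefficient of the vertex
  e(j+1) is then forced to be x j + t (r - 1) r^j.\<close>

lemma mem_open_pp_base_simplex_iff:
  assumes "r \<ge> 1"
  shows "x \<in> open_pp_lattice_points n n (base_vertices r n) \<longleftrightarrow>
    (\<forall>j>n. x j = 0) \<and>
    (\<exists>t::real. 0 < t \<and> t < 1 \<and>
      (\<forall>j<n. 0 < x j + t * real ((r - 1) * r ^ j) \<and> x j + t * real ((r - 1) * r ^ j) < 1) \<and>
      x n = (\<Sum>j<n. real_of_int (x j)) + t * real (r ^ n))"
    (is "_ \<longleftrightarrow> ?R")
proof -
  have coeff_sum: "(\<Sum>i\<le>n. c i) = (\<Sum>j<n. c j - c n * real ((r - 1) * r ^ j)) + c n * real (r ^ n)"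
    for c :: "nat \<Rightarrow> real"
    using sum_pred_mult_power[OF assms, of n, symmetric]
    by (simp add: lessThan_Suc_atMost[symmetric] sum_subtractf sum_distrib_left algebra_simps)
  show ?thesis
  proof
    assume "x \<in> open_pp_lattice_points n n (base_vertices r n)"
    then obtain c :: "nat \<Rightarrow> real" where zero: "\<forall>j>n. x j = 0"
      and c: "\<forall>i\<le>n. 0 < c i \<and> c i < 1"
      and coords: "\<forall>j<n. real_of_int (x j) = (\<Sum>i\<le>n. c i * base_vertices r n i j)"
      and height: "real_of_int (x n) = (\<Sum>i\<le>n. c i)"
      unfolding open_pp_lattice_points_def mem_Collect_eq by blast
    have x: "real_of_int (x j) = c j - c n * real ((r - 1) * r ^ j)" if "j < n" for j
      using coords sum_base_vertices[OF assms that] that by simp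
    have "(\<Sum>j<n. real_of_int (x j)) = (\<Sum>j<n. c j - c n * real ((r - 1) * r ^ j))"
      by (rule sum.cong) (simp_all add: x)
    then have "x n = (\<Sum>j<n. real_of_int (x j)) + c n * real (r ^ n)"
      using height coeff_sum[of c] by simp
    moreover have "\<forall>j<n. 0 < x j + c n * real ((r - 1) * r ^ j) \<and> x j + c n * real ((r - 1) * r ^ j) < 1"
      using c x by simp
    moreover have "0 < c n" "c n < 1"
      using c by simp_all
    ultimately show ?R
      using zero by (intro conjI exI[of _ "c n"]) assumption+
  next
    assume ?R
    then obtain t where zero: "\<forall>j>n. x j = 0" and t: "0 < t" "t < 1"
      and x: "\<forall>j<n. 0 < x j + t * real ((r - 1) * r ^ j) \<and> x j + t * real ((r - 1) * r ^ j) < 1"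
      and xn: "x n = (\<Sum>j<n. real_of_int (x j)) + t * real (r ^ n)"
      by blast
    define c where "c i = (if i < n then x i + t * real ((r - 1) * r ^ i) else t)" for i
    have "real_of_int (x n) = (\<Sum>i\<le>n. c i)"
      using coeff_sum[of c] xn by (simp add: c_def)
    moreover have "\<forall>i\<le>n. 0 < c i \<and> c i < 1"
      using t x by (simp add: c_def)
    ultimately show "x \<in> open_pp_lattice_points n n (base_vertices r n)"
      unfolding open_pp_lattice_points_def
      using zero sum_base_vertices[OF assms] by (auto simp: c_def intro!: exI[of _ c])
  qed
qed

definition floor_sum :: "nat \<Rightarrow> nat \<Rightarrow> nat \<Rightarrow> nat" where
  "floor_sum r n k = (\<Sum>j<n. (r - 1) * k * r ^ j div r ^ n)"

text \<open>The point whose coefficient on the last vertex is k / r^n.\<close>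

definition base_pp_point :: "nat \<Rightarrow> nat \<Rightarrow> nat \<Rightarrow> nat \<Rightarrow> int" where
  "base_pp_point r n k j =
     (if j < n then - int ((r - 1) * k * r ^ j div r ^ n)
      else if j = n then int k - int (floor_sum r n k) else 0)"

lemma sum_base_pp_point: "(\<Sum>j<n. base_pp_point r n k j) = - int (floor_sum r n k)"
  by (simp add: base_pp_point_def floor_sum_def sum_negf)

lemma inj_base_pp_point: "inj (base_pp_point r n)"
proof (rule injI)
  fix k k' assume "base_pp_point r n k = base_pp_point r n k'"
  then have "base_pp_point r n k n - (\<Sum>j<n. base_pp_point r n k j)
      = base_pp_point r n k' n - (\<Sum>j<n. base_pp_point r n k' j)"
    by simp
  then show "k = k'"
    unfolding sum_base_pp_point by (simp add: base_pp_point_def)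
qed

lemma power_dvd_pred_mult_power_iff:
  fixes r k :: nat
  assumes "r \<ge> 2" and "j \<le> n"
  shows "r ^ n dvd (r - 1) * k * r ^ j \<longleftrightarrow> r ^ (n - j) dvd k"
proof -
  have "coprime r (r - 1)"
    using assms(1) by (intro coprime_diff_one_right_nat) simp
  then have "coprime (r ^ (n - j)) (r - 1)"
    by simp
  moreover have "r ^ n = r ^ (n - j) * r ^ j"
    using assms(2) by (simp flip: power_add)
  ultimately show ?thesis
    using assms(1) by (simp add: coprime_dvd_mult_right_iff)
qed

lemma not_power_dvd_pred_mult_power:
  assumes "r \<ge> 2" and "k \<in> nonmultiples_below r (r ^ n)" and "j < n"
  shows "\<not> r ^ n dvd (r - 1) * k * r ^ j"
proof
  assume "r ^ n dvd (r - 1) * k * r ^ j"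
  then have "r ^ (n - j) dvd k"
    using power_dvd_pred_mult_power_iff[OF assms(1) less_imp_le[OF assms(3)]] by blast
  moreover have "r dvd r ^ (n - j)"
    using assms(3) by simp
  ultimately show False
    using assms(2) dvd_trans by (auto simp: nonmultiples_below_def)
qed

lemma base_pp_point_mem_open_pp:
  assumes "r \<ge> 2" and k: "k \<in> nonmultiples_below r (r ^ n)"
  shows "base_pp_point r n k \<in> open_pp_lattice_points n n (base_vertices r n)"
proof -
  define x where "x = base_pp_point r n k"
  define t where "t = real k / real (r ^ n)"
  have "0 < k" "k < r ^ n"
    using k by (cases k; simp add: nonmultiples_below_def)+
  then have "0 < t" "t < 1"
    using assms by (simp_all add: t_def)
  have scaled: "t * real ((r - 1) * r ^ j) = real ((r - 1) * k * r ^ j) / real (r ^ n)" for j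
    by (simp add: t_def)
  have "r ^ n > 0"
    using assms by simp
  have coords: "0 < x j + t * real ((r - 1) * r ^ j) \<and> x j + t * real ((r - 1) * r ^ j) < 1"
    if "j < n" for j
    unfolding scaled int_add_frac_in_unit_interval_iff[OF \<open>r ^ n > 0\<close>]
    using not_power_dvd_pred_mult_power[OF assms that] that
    by (simp add: x_def base_pp_point_def)
  have "(\<Sum>j<n. real_of_int (x j)) = real_of_int (\<Sum>j<n. x j)"
    by simp
  then have height: "x n = (\<Sum>j<n. real_of_int (x j)) + t * real (r ^ n)"
    using \<open>r ^ n > 0\<close> by (simp add: x_def t_def sum_base_pp_point) (simp add: base_pp_point_def)
  show ?thesis
    using assms \<open>0 < t\<close> \<open>t < 1\<close> coords height unfolding x_def
    by (subst mem_open_pp_base_simplex_iff) (auto simp: base_pp_point_def)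
qed

lemma open_pp_base_simplex_point_cases:
  assumes "r \<ge> 2" and "n \<ge> 1"
    and "x \<in> open_pp_lattice_points n n (base_vertices r n)"
  obtains k where "k \<in> nonmultiples_below r (r ^ n)" and "x = base_pp_point r n k"
proof -
  have "r ^ n > 0"
    using assms by simp
  obtain t :: real where zero: "\<forall>j>n. x j = 0" and "0 < t" "t < 1"
    and coords: "\<forall>j<n. 0 < x j + t * real ((r - 1) * r ^ j) \<and> x j + t * real ((r - 1) * r ^ j) < 1"
    and height: "x n = (\<Sum>j<n. real_of_int (x j)) + t * real (r ^ n)"
    using assms mem_open_pp_base_simplex_iff[of r x n] by auto
  define kk where "kk = x n - (\<Sum>j<n. x j)"
  have kk_real: "real_of_int kk = t * real (r ^ n)"
    unfolding kk_def using height by (simp only: of_int_diff of_int_sum)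
  then have "real_of_int kk > 0" "real_of_int kk < real_of_int (int (r ^ n))"
    using \<open>0 < t\<close> \<open>t < 1\<close> \<open>r ^ n > 0\<close> by simp_all
  then have "kk > 0" "kk < int (r ^ n)"
    by (simp_all only: of_int_0_less_iff of_int_less_iff)
  define k where "k = nat kk"
  have "int k = kk"
    using \<open>kk > 0\<close> by (simp add: k_def)
  then have "k < r ^ n"
    using \<open>kk < int (r ^ n)\<close> of_nat_less_iff by metis
  have k_real: "real k = t * real (r ^ n)"
    using kk_real \<open>int k = kk\<close> by (metis of_int_of_nat_eq)
  have scaled: "t * real ((r - 1) * r ^ j) = real ((r - 1) * k * r ^ j) / real (r ^ n)" for j
    using k_real \<open>r ^ n > 0\<close> by (simp add: field_simps)
  have x_coord: "x j = - int ((r - 1) * k * r ^ j div r ^ n) \<and> \<not> r ^ n dvd (r - 1) * k * r ^ j"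
    if "j < n" for j
    using coords that
    unfolding scaled int_add_frac_in_unit_interval_iff[OF \<open>r ^ n > 0\<close>, symmetric] by blast
  have "\<not> r dvd k"
    using x_coord[of "n - 1"] assms power_dvd_pred_mult_power_iff[of r "n - 1" n k] by auto
  then have "k \<in> nonmultiples_below r (r ^ n)"
    using \<open>k < r ^ n\<close> by (simp add: nonmultiples_below_def)
  moreover have "x = base_pp_point r n k"
  proof
    fix j
    have "(\<Sum>j<n. x j) = (\<Sum>j<n. base_pp_point r n k j)"
      using x_coord by (simp add: base_pp_point_def)
    then have "x n = int k - int (floor_sum r n k)"
      using \<open>int k = kk\<close> by (simp add: kk_def sum_base_pp_point)
    then show "x j = base_pp_point r n k j"
      using x_coord zero by (cases rule: linorder_cases[of j n]) (simp_all add: base_pp_point_def)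
  qed
  ultimately show ?thesis
    by (rule that)
qed

lemma open_pp_base_simplex_eq_image:
  assumes "r \<ge> 2" and "n \<ge> 1"
  shows "open_pp_lattice_points n n (base_vertices r n) = base_pp_point r n ` nonmultiples_below r (r ^ n)"
  using open_pp_base_simplex_point_cases[OF assms] base_pp_point_mem_open_pp[OF assms(1)] by blast

lemma floor_sum_eq_sum_div_power:
  assumes "r > 0"
  shows "floor_sum r n k = (\<Sum>s<n. (r - 1) * k div r ^ Suc s)"
proof -
  have "(r - 1) * k * r ^ j div r ^ n = (r - 1) * k div r ^ Suc (n - Suc j)" if "j < n" for j
  proof -
    have "r ^ n = r ^ Suc (n - Suc j) * r ^ j"
      using that by (simp flip: power_add power_Suc)
    then show ?thesis
      using assms by simp
  qed
  then have "floor_sum r n k = (\<Sum>j<n. (r - 1) * k div r ^ Suc (n - Suc j))"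
    by (simp add: floor_sum_def)
  also have "\<dots> = (\<Sum>s<n. (r - 1) * k div r ^ Suc s)"
    by (rule sum.nat_diff_reindex)
  finally show ?thesis .
qed

lemma height_base_pp_point:
  assumes "r \<ge> 2" and "k < r ^ n"
  shows "nat (base_pp_point r n k n) = (digit_sum r n ((r - 1) * k mod r ^ n) + (r - 1) - 1) div (r - 1)"
proof -
  define q where "q = r - 1"
  define L D Q where "L = floor_sum r n k" and "D = digit_sum r n (q * k)" and "Q = q * k div r ^ n"
  have "q > 0"
    using assms by (simp add: q_def)
  have legendre: "q * L + D + Q = q * k"
    using digit_sum_legendre[where m=n and K="q * k"] assms floor_sum_eq_sum_div_power[of r n k]
    by (simp add: q_def L_def D_def Q_def)
  have "Q < q"
    using assms \<open>q > 0\<close> by (simp add: Q_def less_mult_imp_div_less)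
  have "q * L \<le> q * k"
    using legendre by linarith
  then have "L \<le> k"
    using \<open>q > 0\<close> by simp
  then have "D + Q = q * (k - L)"
    using legendre by (simp add: diff_mult_distrib2)
  then have "D + q - 1 = (q - 1 - Q) + q * (k - L)"
    using \<open>Q < q\<close> by linarith
  then have "(D + q - 1) div q = k - L"
    using \<open>q > 0\<close> by simp
  moreover have "nat (base_pp_point r n k n) = k - L"
    using \<open>L \<le> k\<close> by (simp add: base_pp_point_def L_def)
  ultimately show ?thesis
    by (simp add: D_def q_def digit_sum_mod_power)
qed

lemma bij_betw_pred_mult_mod_power:
  assumes "r \<ge> 2" and "n \<ge> 1"
  shows "bij_betw (\<lambda>k. (r - 1) * k mod r ^ n) (nonmultiples_below r (r ^ n)) (nonmultiples_below r (r ^ n))"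
proof (rule bij_betw_mult_mod_nonmultiples_below)
  have "coprime (r - 1) r"
    using assms(1) by (intro coprime_diff_one_left_nat) simp
  then show "coprime (r - 1) (r ^ n)"
    by simp
  show "r dvd r ^ n"
    using assms(2) by (simp add: dvd_power)
qed

theorem local_hstar_base_simplex_digit_sum:
  assumes "r \<ge> 2" and "n \<ge> 1"
  shows "local_hstar n n (base_vertices r n) =
    (\<Sum>a = 1..r - 1. \<Sum>b<r ^ (n - 1). monom 1 ((a + digit_sum r (n - 1) b + (r - 1) - 1) div (r - 1)))"
proof -
  define A where "A = nonmultiples_below r (r ^ n)"
  define G where "G K = monom (1::real) ((digit_sum r n K + (r - 1) - 1) div (r - 1))" for K
  have "local_hstar n n (base_vertices r n) = (\<Sum>k\<in>A. monom 1 (nat (base_pp_point r n k n)))"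
    unfolding local_hstar_def open_pp_base_simplex_eq_image[OF assms] A_def
    by (simp add: sum.reindex inj_on_subset[OF inj_base_pp_point])
  also have "\<dots> = (\<Sum>k\<in>A. G ((r - 1) * k mod r ^ n))"
    using height_base_pp_point[OF assms(1)]
    by (intro sum.cong refl) (simp add: A_def G_def nonmultiples_below_def)
  also have "\<dots> = (\<Sum>K\<in>A. G K)"
    using sum.reindex_bij_betw[OF bij_betw_pred_mult_mod_power[OF assms]] by (simp add: A_def)
  also have "\<dots> = (\<Sum>a = 1..r - 1. \<Sum>b<r ^ (n - 1). G (a + r * b))"
    using sum_nonmultiples_below_mult[of G r "r ^ (n - 1)"] assms(2)
    by (simp add: A_def power_eq_if[of r n])
  also have "\<dots> = (\<Sum>a = 1..r - 1. \<Sum>b<r ^ (n - 1). monom 1 ((a + digit_sum r (n - 1) b + (r - 1) - 1) div (r - 1)))"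
  proof (intro sum.cong refl)
    fix a b assume "a \<in> {1..r - 1}"
    then have "a < r"
      by auto
    then have "digit_sum r n (a + r * b) = a + digit_sum r (n - 1) b"
      using assms(2) digit_sum_Suc_add_mult[of a r "n - 1" b] by simp
    then show "G (a + r * b) = monom 1 ((a + digit_sum r (n - 1) b + (r - 1) - 1) div (r - 1))"
      by (simp add: G_def)
  qed
  finally show ?thesis .
qed

theorem theorem4p2:
  fixes r n :: nat
  assumes "r \<ge> 2" and "n \<ge> 1"
  shows "local_hstar n n (base_vertices r n) =
    (let F = (\<lambda>i. section_poly (r - 1) i (f_r r (n - 1))) in
      [:0, 1:] * (\<Sum>i = 0..r - 2. F i)
      + [:0, 1:] * (\<Sum>l = 1..r - 2. (\<Sum>i = 0..l - 1. F i) + [:0, 1:] * (\<Sum>i = l..r - 2. F i)))"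
proof -
  have "r - 2 = (r - 1) - 1" and "r - 1 > 0"
    using assms(1) by simp_all
  then show ?thesis
    unfolding Let_def f_r_eq_sum_digit_sum local_hstar_base_simplex_digit_sum[OF assms]
    by (simp only: section_poly_staircase_sum)
qed

end
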